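(* Let $p$ be a prime and $0\le\ell<p$. Then \[S_\ell^{*0}-S_\ell^*=(-1)^\ell.\]
   Context: For $u\in\mathbb{F}_p$ and $0\le\ell<p$, $S_\ell^*(u)=\{S\subseteq\mathbb{F}_p^* \mid \#S=\ell,\ \sum_{s\in S}s=u\}$, where $\mathbb{F}_p^*=\mathbb{F}_p\setminus\{0\}$ and sums are in $\mathbb{F}_p$. The cardinality $\#S_\ell^*(u)$ does not depend on $u\in\mathbb{F}_p^*$; this common value is denoted $S_\ell^*$. Also $S_\ell^{*0}:=\#S_\ell^*(0)$ (so e.g. $S_0^{*0}=1$, $S_0^*=0$). *)

theory Defs
  imports "HOL-Computational_Algebra.Primes"
begin

text \<open>We model \<open>F_p\<close> as the residues \<open>{0..<p}\<close> with arithmetic mod p,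
  and \<open>F_p^*\<close> as \<open>{1..<p}\<close>.\<close>

definition Sstar :: "nat \<Rightarrow> nat \<Rightarrow> nat \<Rightarrow> nat set set" where
  "Sstar p l u = {S. S \<subseteq> {1..<p} \<and> card S = l \<and> (\<Sum>S) mod p = u}"

end

theory Submission
  imports Defs "HOL-Number_Theory.Cong"
begin

text \<open>Write \<open>Sall p l u\<close> for the set \<open>S_l(u)\<close> of \<open>l\<close>-subsets of all of \<open>F_p\<close> with sum \<open>u\<close>.
  For \<open>0 < l < p\<close>, translating by \<open>c\<close> maps \<open>S_l(u)\<close> injectively into \<open>S_l(u + l c)\<close>, and \<open>l\<close> is
  invertible mod \<open>p\<close>, so \<open>#S_l(u)\<close> does not depend on \<open>u\<close>. Sorting the subsets by whether
  they contain \<open>0\<close> gives \<open>#S_l(u) = #S*_l(u) + #S*_(l-1)(u)\<close>, so the difference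
  \<open>S*0_l - S*_l\<close> changes sign from \<open>l - 1\<close> to \<open>l\<close>, and it is \<open>1 - 0\<close> for \<open>l = 0\<close>.\<close>

definition Sall :: "nat \<Rightarrow> nat \<Rightarrow> nat \<Rightarrow> nat set set" where
  "Sall p l u = {S. S \<subseteq> {0..<p} \<and> card S = l \<and> (\<Sum>S) mod p = u}"

lemma finite_Sall: "finite (Sall p l u)"
  by (rule finite_subset[of _ "Pow {0..<p}"]) (auto simp: Sall_def)

lemma inj_on_add_mod: "inj_on (\<lambda>x. (x + c) mod p) {0..<p :: nat}"
proof (rule inj_onI)
  fix x y :: nat
  assume "x \<in> {0..<p}" "y \<in> {0..<p}" "(x + c) mod p = (y + c) mod p"
  then show "x = y"
    using cong_add_rcancel_nat[of x c y p] by (simp add: cong_def)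
qed

lemma translate_mem_Sall:
  assumes "S \<in> Sall p l v"
  shows "(\<lambda>x. (x + c) mod p) ` S \<in> Sall p l ((v + l * c) mod p)"
proof -
  let ?g = "\<lambda>x. (x + c) mod p"
  have S: "S \<subseteq> {0..<p}" "card S = l" "(\<Sum>S) mod p = v"
    using assms by (auto simp: Sall_def)
  then have inj: "inj_on ?g S"
    using inj_on_add_mod inj_on_subset by blast
  have "(\<Sum>(?g ` S)) mod p = (\<Sum>x\<in>S. (x + c) mod p) mod p"
    by (simp add: sum.reindex[OF inj])
  also have "\<dots> = (\<Sum>x\<in>S. x + c) mod p"
    by (rule mod_sum_eq)
  also have "\<dots> = (v + l * c) mod p"
    using S(2,3) mod_add_left_eq[of "\<Sum>S" p "l * c"] by (simp add: sum.distrib)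
  finally show ?thesis
    using S(1) card_image[OF inj] S(2) by (auto simp: Sall_def)
qed

lemma card_Sall_le_translate:
  "card (Sall p l v) \<le> card (Sall p l ((v + l * c) mod p))"
proof (rule card_inj_on_le[OF _ _ finite_Sall])
  show "inj_on (image (\<lambda>x. (x + c) mod p)) (Sall p l v)"
    using inj_on_image_Pow[OF inj_on_add_mod] by (rule inj_on_subset) (auto simp: Sall_def)
  show "image (\<lambda>x. (x + c) mod p) ` Sall p l v \<subseteq> Sall p l ((v + l * c) mod p)"
    using translate_mem_Sall by blast
qed

lemma coprime_imp_ex_add_mult_mod_eq:
  fixes l p x y :: nat
  assumes "coprime l p" "y < p"
  shows "\<exists>c. (x + l * c) mod p = y"
proof -
  \<comment> \<open>\<open>p * x + y - x\<close> is \<open>y - x\<close> shifted by a multiple of \<open>p\<close> so that it is not truncated\<close>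
  obtain c where "[l * c = p * x + y - x] (mod p)"
    using cong_solve_dvd_nat[of l p] assms(1) by auto
  moreover have "x + (p * x + y - x) = y + x * p"
    using assms(2) by (cases p) auto
  ultimately have "(x + l * c) mod p = (y + x * p) mod p"
    by (metis cong_add_lcancel_nat cong_def)
  then show ?thesis
    using assms(2) by auto
qed

lemma card_Sall_independent:
  assumes "prime p" "0 < l" "l < p" "v < p" "w < p"
  shows "card (Sall p l v) = card (Sall p l w)"
proof -
  have "coprime l p"
    using prime_imp_coprime[OF assms(1) nat_dvd_not_less[OF assms(2,3)]]
    by (simp add: coprime_commute)
  then show ?thesis
    using card_Sall_le_translate coprime_imp_ex_add_mult_mod_eq[of l p] assms(4,5) le_antisym
    by metis
qed

lemma card_Sall_split:
  assumes "0 < l" "0 < p"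
  shows "card (Sall p l u) = card (Sstar p l u) + card (Sstar p (l - 1) u)"
proof -
  have "{1..<p} = {0..<p} - {0}"
    by auto
  then have without_0: "Sstar p l u = Sall p l u - {S. 0 \<in> S}"
    by (auto simp: Sstar_def Sall_def subset_Diff_insert)
  have "bij_betw (insert 0) (Sstar p (l - 1) u) (Sall p l u \<inter> {S. 0 \<in> S})"
  proof (rule bij_betw_byWitness[where f' = "\<lambda>S. S - {0}"])
    show "(\<lambda>S. S - {0}) ` (Sall p l u \<inter> {S. 0 \<in> S}) \<subseteq> Sstar p (l - 1) u"
      by (auto simp: Sall_def Sstar_def sum_diff1_nat dest: finite_subset)
    show "insert 0 ` Sstar p (l - 1) u \<subseteq> Sall p l u \<inter> {S. 0 \<in> S}"
    proof
      fix T assume "T \<in> insert 0 ` Sstar p (l - 1) u"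
      then obtain R where R: "R \<subseteq> {1..<p}" "card R = l - 1" "(\<Sum>R) mod p = u" "T = insert 0 R"
        by (auto simp: Sstar_def)
      moreover have "finite R" "0 \<notin> R"
        using R(1) finite_subset by auto
      ultimately show "T \<in> Sall p l u \<inter> {S. 0 \<in> S}"
        using assms by (auto simp: Sall_def)
    qed
  qed (auto simp: Sstar_def)
  then have with_0: "card (Sall p l u \<inter> {S. 0 \<in> S}) = card (Sstar p (l - 1) u)"
    by (simp add: bij_betw_same_card)
  show ?thesis
    using card_Int_Diff[OF finite_Sall, of p l u "{S. 0 \<in> S}"] without_0 with_0 by simp
qed

lemma Sstar_0: "Sstar p 0 u = (if u = 0 then {{}} else {})"
  by (auto simp: Sstar_def dest: finite_subset)

theorem proposition5:
  fixes p l :: nat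
  assumes "prime p" and "l < p"
  shows "\<forall>u\<in>{1..<p}. int (card (Sstar p l 0)) - int (card (Sstar p l u)) = (-1) ^ l"
proof
  fix u assume u: "u \<in> {1..<p}"
  show "int (card (Sstar p l 0)) - int (card (Sstar p l u)) = (-1) ^ l"
    using assms(2)
  proof (induction l)
    case 0
    then show ?case
      using u by (simp add: Sstar_0)
  next
    case (Suc l)
    have "p > 0"
      using Suc.prems by simp
    then have "card (Sstar p (Suc l) 0) + card (Sstar p l 0) = card (Sstar p (Suc l) u) + card (Sstar p l u)"
      using card_Sall_independent[OF assms(1) _ Suc.prems, of 0 u] card_Sall_split[of "Suc l" p] u
      by simp
    then show ?case
      using Suc by simp
  qed
qed

end
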